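(* Let $p$ be a prime and $(r,e,d)\in\mathscr{B}_0(p)$ with $p\mid r$. Then $r=p$, $e=p-1$, $d=p-1$, and $\det M_d(f(x)^e)=\varepsilon\,\delta(x_1,\ldots,x_r)^{2e-(p-1)}$ with $\varepsilon=1$ if $p\equiv1,2\pmod 4$ and $\varepsilon=-1$ if $p\equiv3\pmod4$.
   Context: Let $p$ be a prime. $\mathscr{B}_0(p)$ is the set of integer triples $(r,e,d)$ with $2\le r\le p+1$, $(p-1)/2<e\le p-1$, $r(p-1-e)\le p-1$, $d=r-1$. Let $x_1,\ldots,x_r$ be independent indeterminates over $\mathbb{F}_p$, $f(x)=(x-x_1)\cdots(x-x_r)$, write $f(x)^e=\sum_{i\ge0}c_ix^i$ ($c_i=0$ for $i<0$), and let $M_d(f(x)^e)$ be the $d\times d$ matrix with $(i,j)$ entry $c_{ip+j-d-1}$. Put $\delta(x_1,\ldots,x_r)=\prod_{1\le i<j\le r}(x_i-x_j)$. *)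

theory Defs
  imports "Berlekamp_Zassenhaus.Finite_Field" "Jordan_Normal_Form.Determinant"
    "HOL-Library.Poly_Mapping" "HOL-Computational_Algebra.Polynomial"
begin

text \<open>Multivariate polynomial ring F_p[x_1, x_2, ...]: finitely supported maps
  from monomials (exponent vectors nat \<Rightarrow>0 nat) to coefficients in F_p = 'p mod_ring,
  with p = CARD('p) prime.\<close>
type_synonym 'p mpoly = "(nat \<Rightarrow>\<^sub>0 nat) \<Rightarrow>\<^sub>0 'p mod_ring"

definition Xv :: "nat \<Rightarrow> 'p::prime_card mpoly" where
  "Xv i = Poly_Mapping.single (Poly_Mapping.single i 1) 1"

definition fpoly :: "nat \<Rightarrow> 'p::prime_card mpoly poly" where
  "fpoly r = (\<Prod>i\<in>{1..r}. [: - Xv i, 1 :])"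

definition coef_int :: "'a::zero poly \<Rightarrow> int \<Rightarrow> 'a" where
  "coef_int q k = (if k < 0 then 0 else coeff q (nat k))"

text \<open>M_d(g): d x d matrix with (i,j) entry c_{ip+j-d-1}, i,j = 1..d
  (Jordan_Normal_Form matrices are 0-indexed, so entry (i,j) here is the paper's (i+1,j+1)).\<close>
definition Md :: "nat \<Rightarrow> nat \<Rightarrow> 'a::zero poly \<Rightarrow> 'a mat" where
  "Md p d g = mat d d (\<lambda>(i, j). coef_int g (int (i + 1) * int p + int (j + 1) - int d - 1))"

definition delta :: "nat \<Rightarrow> 'p::prime_card mpoly" where
  "delta r = (\<Prod>i\<in>{1..r}. \<Prod>j\<in>{i<..r}. (Xv i - Xv j))"

text \<open>The set B_0(p); (p-1)/2 < e is written as p - 1 < 2e.\<close>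
definition B0 :: "nat \<Rightarrow> (nat \<times> nat \<times> nat) set" where
  "B0 p = {(r, e, d). 2 \<le> r \<and> r \<le> p + 1 \<and> p - 1 < 2 * e \<and> e \<le> p - 1
                     \<and> r * (p - 1 - e) \<le> p - 1 \<and> d = r - 1}"

end

(*
  Put f = (X - x_0) ... (X - x_(p-1)), g = f^(p-1) and F_j = f / (X - x_j). Let A be the
  p x p matrix (c_(ap+k)) of coefficients of g, and B, B' the matrices with (k, j) entries
  coeff F_j k and coeff F_j (p-1-k). The (a, j) entry of A B' is the coefficient of
  X^(ap+p-1) in g F_j = F_j^p (X - x_j)^(p-1); in characteristic p the only monomials of
  F_j^p are (coeff F_j i)^p X^(ip), so A B' is B with the Frobenius applied entrywise.
  Evaluating the F_j at the nodes gives a diagonal matrix, which factors as a Vandermonde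
  matrix times B and as a column-reversed Vandermonde matrix times B'; hence det B = delta
  and det B' = delta up to the sign of reversing p rows, so det A = +-delta^(p-1).
  Deleting the last row (1, 0, ..., 0) and the first column of A leaves M_(p-1)(g).
  Finally, the inequalities defining B_0(p) together with p | r force r = p and e = p - 1.
*)

theory Submission
  imports Defs
begin

section \<open>Vandermonde-type determinants\<close>

lemma mat_mult_mat:
  "mat n k f * mat k m g = mat n m (\<lambda>(i, j). \<Sum>l<k. f (i, l) * g (l, j))"
  by (rule eq_matI) (auto simp: scalar_prod_def lessThan_atLeast0 intro!: sum.cong)

lemma det_mat_mult_mat:
  "det (mat n n f * mat n n g) = det (mat n n f) * det (mat n n g)"
  for f g :: "nat \<times> nat \<Rightarrow> 'a::comm_ring_1"
  by (rule det_mult) auto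

lemma degree_prod_linear: "degree (\<Prod>m\<in>S. [:- y m, 1:]) = card (S :: 'b set)"
  for y :: "'b \<Rightarrow> 'a::idom"
  by (simp add: degree_prod_sum_eq)

lemma lead_coeff_prod_linear: "lead_coeff (\<Prod>m\<in>S. [:- y m, 1:]) = 1"
  for y :: "'b \<Rightarrow> 'a::idom"
  by (simp add: lead_coeff_prod)

lemma coeff_prod_linear_card: "coeff (\<Prod>m\<in>S. [:- y m, 1:]) (card S) = 1"
  for y :: "'b \<Rightarrow> 'a::idom"
  using lead_coeff_prod_linear[of y S] by (simp add: degree_prod_linear)

lemma poly_eval_mat_factor:
  fixes x :: "nat \<Rightarrow> 'a::comm_ring_1" and Q :: "nat \<Rightarrow> 'a poly"
  assumes "\<And>j. j < n \<Longrightarrow> degree (Q j) < n"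
  shows "mat n n (\<lambda>(i, j). poly (Q j) (x i))
       = mat n n (\<lambda>(i, k). x i ^ k) * mat n n (\<lambda>(k, j). coeff (Q j) k)"
  unfolding mat_mult_mat
proof (rule eq_matI, simp_all)
  fix i j assume "i < n" "j < n"
  have "poly (Q j) (x i) = (\<Sum>k\<le>degree (Q j). coeff (Q j) k * x i ^ k)"
    by (rule poly_altdef)
  also have "\<dots> = (\<Sum>k<n. coeff (Q j) k * x i ^ k)"
    using assms[OF \<open>j < n\<close>] by (intro sum.mono_neutral_left) (auto simp: coeff_eq_0)
  finally show "poly (Q j) (x i) = (\<Sum>k<n. x i ^ k * coeff (Q j) k)"
    by (simp add: mult.commute)
qed

lemma poly_eval_mat_factor_rev:
  fixes x :: "nat \<Rightarrow> 'a::comm_ring_1" and Q :: "nat \<Rightarrow> 'a poly"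
  assumes "\<And>j. j < n \<Longrightarrow> degree (Q j) < n"
  shows "mat n n (\<lambda>(i, j). poly (Q j) (x i))
       = mat n n (\<lambda>(i, k). x i ^ (n - 1 - k)) * mat n n (\<lambda>(k, j). coeff (Q j) (n - 1 - k))"
proof -
  have "mat n n (\<lambda>(i, k). x i ^ (n - 1 - k)) * mat n n (\<lambda>(k, j). coeff (Q j) (n - 1 - k))
      = mat n n (\<lambda>(i, k). x i ^ k) * mat n n (\<lambda>(k, j). coeff (Q j) k)"
    unfolding mat_mult_mat by (rule eq_matI) (simp_all, rule sum.nat_diff_reindex)
  then show ?thesis
    by (simp add: poly_eval_mat_factor[OF assms])
qed

lemma det_vandermonde:
  fixes x :: "nat \<Rightarrow> 'a::idom"
  shows "det (mat n n (\<lambda>(i, k). x i ^ k)) = (\<Prod>i<n. \<Prod>m<i. (x i - x m))"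
proof -
  define N where "N j = (\<Prod>m<j. [:- x m, 1:])" for j
  have deg_N: "degree (N j) = j" and coeff_N: "coeff (N j) j = 1" for j
    using degree_prod_linear[of x "{..<j}"] coeff_prod_linear_card[of x "{..<j}"]
    by (simp_all add: N_def)
  have "det (mat n n (\<lambda>(i, j). poly (N j) (x i))) = (\<Prod>i<n. \<Prod>m<i. (x i - x m))"
    by (subst det_lower_triangular[of n])
      (auto simp: N_def poly_prod prod_list_diag_prod atLeast0LessThan)
  moreover have "det (mat n n (\<lambda>(k, j). coeff (N j) k)) = 1"
    by (subst det_upper_triangular)
      (auto simp: upper_triangular_def coeff_eq_0 deg_N prod_list_diag_prod coeff_N)
  ultimately show ?thesis
    by (simp add: poly_eval_mat_factor deg_N det_mat_mult_mat)
qed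

lemma det_vandermonde_rev:
  fixes x :: "nat \<Rightarrow> 'a::idom"
  shows "det (mat n n (\<lambda>(i, k). x i ^ (n - 1 - k))) = (\<Prod>i<n. \<Prod>m\<in>{i<..<n}. (x i - x m))"
proof -
  define N where "N j = (\<Prod>m\<in>{j<..<n}. [:- x m, 1:])" for j
  have deg_N: "degree (N j) = n - Suc j" and coeff_N: "coeff (N j) (n - Suc j) = 1" for j
    using degree_prod_linear[of x "{j<..<n}"] coeff_prod_linear_card[of x "{j<..<n}"]
    by (simp_all add: N_def)
  have "det (mat n n (\<lambda>(i, j). poly (N j) (x i))) = (\<Prod>i<n. \<Prod>m\<in>{i<..<n}. (x i - x m))"
    by (subst det_upper_triangular)
      (auto simp: upper_triangular_def N_def poly_prod prod_list_diag_prod atLeast0LessThan)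
  moreover have "det (mat n n (\<lambda>(k, j). coeff (N j) (n - 1 - k))) = 1"
    by (subst det_lower_triangular[of n])
      (auto simp: coeff_eq_0 deg_N prod_list_diag_prod coeff_N)
  ultimately show ?thesis
    by (simp add: poly_eval_mat_factor_rev deg_N det_mat_mult_mat)
qed

definition lagrange_numerator :: "(nat \<Rightarrow> 'a::comm_ring_1) \<Rightarrow> nat \<Rightarrow> nat \<Rightarrow> 'a poly" where
  "lagrange_numerator x n j = (\<Prod>m\<in>{..<n} - {j}. [:- x m, 1:])"

lemma degree_lagrange_numerator:
  "j < n \<Longrightarrow> degree (lagrange_numerator x n j) = n - 1" for x :: "nat \<Rightarrow> 'a::idom"
  by (simp add: lagrange_numerator_def degree_prod_linear)

lemma prod_lessThan_remove_split:
  "i < n \<Longrightarrow> (\<Prod>m\<in>{..<n} - {i}. f m) = (\<Prod>m<i. f m) * (\<Prod>m\<in>{i<..<n}. f m)"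
  for n :: nat
proof -
  assume "i < n"
  then have "{..<n} - {i} = {..<i} \<union> {i<..<n}" by auto
  moreover have "(\<Prod>m\<in>{..<i} \<union> {i<..<n}. f m) = (\<Prod>m<i. f m) * (\<Prod>m\<in>{i<..<n}. f m)"
    by (rule prod.union_disjoint) auto
  ultimately show ?thesis by simp
qed

lemma poly_lagrange_numerator:
  fixes x :: "nat \<Rightarrow> 'a::comm_ring_1"
  assumes "i < n"
  shows "poly (lagrange_numerator x n j) (x i) = (if i = j then \<Prod>m\<in>{..<n} - {i}. (x i - x m) else 0)"
proof (cases "i = j")
  case False
  then have "(\<Prod>m\<in>{..<n} - {j}. x i - x m) = 0"
    using assms by (intro prod_zero bexI[of _ i]) auto
  with False show ?thesis by (simp add: lagrange_numerator_def poly_prod)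
qed (simp add: lagrange_numerator_def poly_prod)

lemma det_lagrange_numerator_eval_mat:
  fixes x :: "nat \<Rightarrow> 'a::comm_ring_1"
  shows "det (mat n n (\<lambda>(i, j). poly (lagrange_numerator x n j) (x i)))
       = (\<Prod>i<n. \<Prod>m<i. (x i - x m)) * (\<Prod>i<n. \<Prod>m\<in>{i<..<n}. (x i - x m))"
proof -
  have "det (mat n n (\<lambda>(i, j). poly (lagrange_numerator x n j) (x i)))
      = (\<Prod>i<n. \<Prod>m\<in>{..<n} - {i}. (x i - x m))"
    by (subst det_upper_triangular)
      (auto simp: upper_triangular_def poly_lagrange_numerator prod_list_diag_prod atLeast0LessThan)
  also have "\<dots> = (\<Prod>i<n. \<Prod>m<i. (x i - x m)) * (\<Prod>i<n. \<Prod>m\<in>{i<..<n}. (x i - x m))"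
    by (simp add: prod_lessThan_remove_split prod.distrib)
  finally show ?thesis .
qed

lemma prod_lower_triangle_swap:
  "(\<Prod>i<n. \<Prod>m<i. g i m) = (\<Prod>m<n. \<Prod>i\<in>{m<..<n}. g i m)" for n :: nat
proof (induction n)
  case (Suc n)
  have "{n<..<Suc n} = {}" by auto
  then have "(\<Prod>m<Suc n. \<Prod>i\<in>{m<..<Suc n}. g i m) = (\<Prod>m<n. \<Prod>i\<in>{m<..<Suc n}. g i m)"
    by simp
  also have "\<dots> = (\<Prod>m<n. g n m * (\<Prod>i\<in>{m<..<n}. g i m))"
  proof (intro prod.cong refl)
    fix m assume "m \<in> {..<n}"
    then have "{m<..<Suc n} = insert n {m<..<n}" by auto
    then show "(\<Prod>i\<in>{m<..<Suc n}. g i m) = g n m * (\<Prod>i\<in>{m<..<n}. g i m)" by simp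
  qed
  finally show ?case
    using Suc.IH by (simp add: prod.distrib mult.commute)
qed simp

lemma prod_diffs_lower_eq_upper:
  fixes x :: "nat \<Rightarrow> 'a::comm_ring_1"
  shows "(\<Prod>i<n. \<Prod>m<i. (x i - x m)) = (-1) ^ (\<Sum>i<n. i) * (\<Prod>i<n. \<Prod>m\<in>{i<..<n}. (x i - x m))"
proof -
  have "(\<Prod>i<n. \<Prod>m<i. (x i - x m)) = (\<Prod>i<n. (-1) ^ i * (\<Prod>m<i. (x m - x i)))"
    using prod_uminus[of "\<lambda>m. x _ - x m"] by simp
  also have "\<dots> = (-1) ^ (\<Sum>i<n. i) * (\<Prod>i<n. \<Prod>m<i. (x m - x i))"
    by (simp add: prod.distrib power_sum)
  also have "\<dots> = (-1) ^ (\<Sum>i<n. i) * (\<Prod>i<n. \<Prod>m\<in>{i<..<n}. (x i - x m))"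
    by (simp add: prod_lower_triangle_swap[of _ n])
  finally show ?thesis .
qed

lemma prod_diffs_ne_zero:
  fixes x :: "nat \<Rightarrow> 'a::idom"
  assumes "inj_on x {..<n}"
  shows "(\<Prod>i<n. \<Prod>m<i. (x i - x m)) \<noteq> 0"
    and "(\<Prod>i<n. \<Prod>m\<in>{i<..<n}. (x i - x m)) \<noteq> 0"
proof -
  show lower: "(\<Prod>i<n. \<Prod>m<i. (x i - x m)) \<noteq> 0"
    by (auto simp: inj_on_eq_iff[OF assms])
  then show "(\<Prod>i<n. \<Prod>m\<in>{i<..<n}. (x i - x m)) \<noteq> 0"
    by (auto simp: prod_diffs_lower_eq_upper[of x n])
qed

lemma det_lagrange_numerator_coeff_mat:
  fixes x :: "nat \<Rightarrow> 'a::idom"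
  assumes "inj_on x {..<n}"
  shows "det (mat n n (\<lambda>(k, j). coeff (lagrange_numerator x n j) k))
       = (\<Prod>i<n. \<Prod>m\<in>{i<..<n}. (x i - x m))"
proof -
  have "mat n n (\<lambda>(i, j). poly (lagrange_numerator x n j) (x i))
      = mat n n (\<lambda>(i, k). x i ^ k) * mat n n (\<lambda>(k, j). coeff (lagrange_numerator x n j) k)"
    by (rule poly_eval_mat_factor) (simp add: degree_lagrange_numerator)
  then have "det (mat n n (\<lambda>(i, j). poly (lagrange_numerator x n j) (x i)))
      = det (mat n n (\<lambda>(i, k). x i ^ k)) * det (mat n n (\<lambda>(k, j). coeff (lagrange_numerator x n j) k))"
    by (simp only: det_mat_mult_mat)
  then have "(\<Prod>i<n. \<Prod>m<i. (x i - x m)) * (\<Prod>i<n. \<Prod>m\<in>{i<..<n}. (x i - x m))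
      = (\<Prod>i<n. \<Prod>m<i. (x i - x m)) * det (mat n n (\<lambda>(k, j). coeff (lagrange_numerator x n j) k))"
    unfolding det_lagrange_numerator_eval_mat det_vandermonde .
  then show ?thesis
    using prod_diffs_ne_zero(1)[OF assms] by simp
qed

lemma det_lagrange_numerator_coeff_mat_rev:
  fixes x :: "nat \<Rightarrow> 'a::idom"
  assumes "inj_on x {..<n}"
  shows "det (mat n n (\<lambda>(k, j). coeff (lagrange_numerator x n j) (n - 1 - k)))
       = (\<Prod>i<n. \<Prod>m<i. (x i - x m))"
proof -
  have "mat n n (\<lambda>(i, j). poly (lagrange_numerator x n j) (x i))
      = mat n n (\<lambda>(i, k). x i ^ (n - 1 - k))
        * mat n n (\<lambda>(k, j). coeff (lagrange_numerator x n j) (n - 1 - k))"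
    by (rule poly_eval_mat_factor_rev) (simp add: degree_lagrange_numerator)
  then have "det (mat n n (\<lambda>(i, j). poly (lagrange_numerator x n j) (x i)))
      = det (mat n n (\<lambda>(i, k). x i ^ (n - 1 - k)))
        * det (mat n n (\<lambda>(k, j). coeff (lagrange_numerator x n j) (n - 1 - k)))"
    by (simp only: det_mat_mult_mat)
  then have "(\<Prod>i<n. \<Prod>m<i. (x i - x m)) * (\<Prod>i<n. \<Prod>m\<in>{i<..<n}. (x i - x m))
      = (\<Prod>i<n. \<Prod>m\<in>{i<..<n}. (x i - x m))
        * det (mat n n (\<lambda>(k, j). coeff (lagrange_numerator x n j) (n - 1 - k)))"
    unfolding det_lagrange_numerator_eval_mat det_vandermonde_rev .
  then show ?thesis
    using prod_diffs_ne_zero(2)[OF assms] by simp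
qed

section \<open>The Frobenius on coefficient matrices\<close>

lemma power_CHAR_poly:
  fixes q :: "'a::comm_ring_1 poly"
  assumes "prime CHAR('a)"
  shows "q ^ CHAR('a) = (\<Sum>i\<le>degree q. monom (coeff q i ^ CHAR('a)) (i * CHAR('a)))"
proof -
  have "q ^ CHAR('a) = (\<Sum>i\<le>degree q. monom (coeff q i) i) ^ CHAR('a)"
    by (simp add: poly_as_sum_of_monoms)
  also have "\<dots> = (\<Sum>i\<le>degree q. monom (coeff q i) i ^ CHAR('a))"
    by (rule freshmans_dream_sum) (simp_all add: assms)
  finally show ?thesis
    by (simp add: monom_power)
qed

lemma comm_ring_hom_power_CHAR:
  "prime CHAR('a) \<Longrightarrow> comm_ring_hom (\<lambda>z::'a::comm_ring_1. z ^ CHAR('a))"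
  by unfold_locales (simp_all add: power_mult_distrib freshmans_dream zero_power prime_gt_0_nat)

lemma coeff_power_CHAR_mult:
  fixes q S :: "'a::comm_ring_1 poly"
  assumes "prime CHAR('a)" and "degree S < CHAR('a)" and "k < CHAR('a)"
  shows "coeff (q ^ CHAR('a) * S) (a * CHAR('a) + k) = coeff q a ^ CHAR('a) * coeff S k"
proof -
  define p where "p = CHAR('a)"
  have summand: "coeff (monom c (i * p) * S) (a * p + k) = (if i = a then c * coeff S k else 0)"
    for c i
  proof (cases i a rule: linorder_cases)
    case less
    then have "i * p + p \<le> a * p"
      by (metis add.commute mult_Suc mult_le_mono1 Suc_leI)
    then have "degree S < a * p + k - i * p"
      using assms(2) p_def by linarith
    then show ?thesis
      using less by (simp add: coeff_monom_mult coeff_eq_0)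
  next
    case greater
    then have "a * p + p \<le> i * p"
      by (metis add.commute mult_Suc mult_le_mono1 Suc_leI)
    then show ?thesis
      using greater assms(3) p_def by (simp add: coeff_monom_mult)
  qed (simp add: coeff_monom_mult)
  have "coeff (q ^ p * S) (a * p + k) = (\<Sum>i\<le>degree q. if i = a then coeff q i ^ p * coeff S k else 0)"
    unfolding p_def power_CHAR_poly[OF assms(1)]
    by (simp add: sum_distrib_right coeff_sum summand[unfolded p_def])
  also have "\<dots> = coeff q a ^ p * coeff S k"
    using assms(3) by (auto simp: p_def coeff_eq_0 power_0_left)
  finally show ?thesis
    unfolding p_def .
qed

(* M_(p-1)(g) is this matrix with its last row and first column deleted. *)
definition coeff_block_mat :: "nat \<Rightarrow> 'a::zero poly \<Rightarrow> 'a mat" where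
  "coeff_block_mat p g = mat p p (\<lambda>(a, k). coeff g (a * p + k))"

lemma coeff_block_mat_mult_lagrange_numerator:
  fixes x :: "nat \<Rightarrow> 'a::idom"
  assumes "prime CHAR('a)"
  defines "p \<equiv> CHAR('a)" and "g \<equiv> (\<Prod>m<CHAR('a). [:- x m, 1:]) ^ (CHAR('a) - 1)"
  shows "coeff_block_mat p g * mat p p (\<lambda>(k, j). coeff (lagrange_numerator x p j) (p - 1 - k))
       = map_mat (\<lambda>z. z ^ p) (mat p p (\<lambda>(k, j). coeff (lagrange_numerator x p j) k))"
  unfolding coeff_block_mat_def mat_mult_mat
proof (rule eq_matI, simp_all)
  fix a j assume "a < p" "j < p"
  define F where "F = lagrange_numerator x p j"
  define n where "n = a * p + (p - 1)"
  have p_pos: "p > 0" using \<open>j < p\<close> by simp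
  have deg_F: "degree F = p - 1"
    using \<open>j < p\<close> by (simp add: F_def degree_lagrange_numerator)
  have "(\<Sum>l<p. coeff g (a * p + l) * coeff F (p - Suc l))
      = (\<Sum>l<p. coeff F (p - Suc l) * coeff g (n - (p - Suc l)))"
    by (rule sum.cong) (auto simp: n_def)
  also have "\<dots> = (\<Sum>l<p. coeff F l * coeff g (n - l))"
    by (rule sum.nat_diff_reindex)
  also have "\<dots> = (\<Sum>l\<le>n. coeff F l * coeff g (n - l))"
    using deg_F p_pos by (intro sum.mono_neutral_left) (auto simp: n_def coeff_eq_0)
  also have "\<dots> = coeff (F * g) n"
    by (simp add: coeff_mult)
  also have "F * g = F ^ p * [:- x j, 1:] ^ (p - 1)"
  proof -
    have "(\<Prod>m<p. [:- x m, 1:]) = [:- x j, 1:] * F"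
      unfolding F_def lagrange_numerator_def using \<open>j < p\<close> by (intro prod.remove) auto
    then have "F * g = (F * F ^ (p - 1)) * [:- x j, 1:] ^ (p - 1)"
      by (simp only: g_def p_def power_mult_distrib mult_ac)
    also have "F * F ^ (p - 1) = F ^ p"
      using p_pos by (cases p) simp_all
    finally show ?thesis .
  qed
  also have "coeff (F ^ p * [:- x j, 1:] ^ (p - 1)) n = coeff F a ^ p"
    using lead_coeff_power[of "[:- x j, 1:]" "p - 1"] assms(1) p_pos
    unfolding n_def p_def by (subst coeff_power_CHAR_mult) (simp_all add: degree_linear_power)
  finally show "(\<Sum>l<p. coeff g (a * p + l) * coeff (lagrange_numerator x p j) (p - Suc l))
      = coeff (lagrange_numerator x p j) a ^ p"
    unfolding F_def .
qed

lemma det_coeff_block_mat_power_prod_linear: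
  fixes x :: "nat \<Rightarrow> 'a::idom"
  assumes prime: "prime CHAR('a)" and inj: "inj_on x {..<CHAR('a)}"
  defines "p \<equiv> CHAR('a)"
  shows "det (coeff_block_mat p ((\<Prod>m<p. [:- x m, 1:]) ^ (p - 1))) * (-1) ^ (\<Sum>i<p. i)
       = (\<Prod>i<p. \<Prod>m\<in>{i<..<p}. (x i - x m)) ^ (p - 1)"
proof -
  define A where "A = coeff_block_mat p ((\<Prod>m<p. [:- x m, 1:]) ^ (p - 1))"
  define D where "D = (\<Prod>i<p. \<Prod>m\<in>{i<..<p}. (x i - x m))"
  define \<sigma> where "\<sigma> = (-1 :: 'a) ^ (\<Sum>i<p. i)"
  have "det (mat p p (\<lambda>(k, j). coeff (lagrange_numerator x p j) (p - 1 - k))) = \<sigma> * D"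
    unfolding det_lagrange_numerator_coeff_mat_rev[OF inj[folded p_def]] D_def \<sigma>_def
    by (rule prod_diffs_lower_eq_upper)
  then have "det A * (\<sigma> * D)
      = det (A * mat p p (\<lambda>(k, j). coeff (lagrange_numerator x p j) (p - 1 - k)))"
    by (simp add: det_mult[where n = p] A_def coeff_block_mat_def)
  also have "\<dots> = det (map_mat (\<lambda>z. z ^ p) (mat p p (\<lambda>(k, j). coeff (lagrange_numerator x p j) k)))"
    using coeff_block_mat_mult_lagrange_numerator[OF prime, of x] by (simp only: A_def p_def)
  also have "\<dots> = D ^ p"
    using comm_ring_hom.hom_det[OF comm_ring_hom_power_CHAR[OF prime]]
    by (simp add: det_lagrange_numerator_coeff_mat[OF inj] D_def p_def)
  also have "\<dots> = D ^ (p - 1) * D"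
    using prime_gt_0_nat[OF prime] by (cases p) (simp_all add: p_def mult.commute)
  finally have "(det A * \<sigma>) * D = D ^ (p - 1) * D"
    by (simp only: mult.assoc)
  then show ?thesis
    using prod_diffs_ne_zero(2)[OF inj] by (simp add: A_def D_def \<sigma>_def p_def)
qed

section \<open>The determinant of M_(p-1)(f^(p-1))\<close>

lemma coef_int_of_nat: "coef_int q (int n) = coeff q n"
  by (simp add: coef_int_def)

lemma det_coeff_block_mat:
  fixes g :: "'a::comm_ring_1 poly"
  assumes "p > 0" and "degree g = (p - 1) * p" and "lead_coeff g = 1"
  shows "det (coeff_block_mat p g) = (-1) ^ (p - 1) * det (Md p (p - 1) g)"
proof -
  define A where "A = coeff_block_mat p g"
  have A_carrier: "A \<in> carrier_mat p p"
    by (simp add: A_def coeff_block_mat_def)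
  have last_row: "A $$ (p - 1, j) = (if j = 0 then 1 else 0)" if "j < p" for j
    using that assms by (auto simp: A_def coeff_block_mat_def coeff_eq_0)
  have "det A = (\<Sum>j<p. A $$ (p - 1, j) * cofactor A (p - 1) j)"
    using assms(1) by (intro laplace_expansion_row[OF A_carrier]) auto
  also have "\<dots> = (\<Sum>j<p. if j = 0 then cofactor A (p - 1) 0 else 0)"
    using last_row by (intro sum.cong refl) (simp add: lessThan_iff)
  also have "\<dots> = cofactor A (p - 1) 0"
    using assms(1) by simp
  also have "\<dots> = (-1) ^ (p - 1) * det (mat_delete A (p - 1) 0)"
    by (simp add: cofactor_def)
  also have "mat_delete A (p - 1) 0 = Md p (p - 1) g"
  proof (rule eq_matI)
    fix i j assume "i < dim_row (Md p (p - 1) g)" and "j < dim_col (Md p (p - 1) g)"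
    then have "i < p - 1" "j < p - 1" by (auto simp: Md_def)
    then have "Md p (p - 1) g $$ (i, j)
        = coef_int g (int (i + 1) * int p + int (j + 1) - int (p - 1) - 1)"
      by (simp add: Md_def)
    also have "int (i + 1) * int p + int (j + 1) - int (p - 1) - 1 = int (i * p + j + 1)"
      using assms(1) by (simp add: of_nat_diff algebra_simps)
    also have "coef_int g (int (i * p + j + 1)) = coeff g (i * p + j + 1)"
      by (rule coef_int_of_nat)
    also have "\<dots> = mat_delete A (p - 1) 0 $$ (i, j)"
      using \<open>i < p - 1\<close> \<open>j < p - 1\<close>
      by (simp add: mat_delete_def A_def coeff_block_mat_def)
    finally show "mat_delete A (p - 1) 0 $$ (i, j) = Md p (p - 1) g $$ (i, j)" ..
  qed (auto simp: Md_def A_def coeff_block_mat_def mat_delete_def)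
  finally show ?thesis
    unfolding A_def .
qed

lemma even_sum_lessThan_iff: "even (\<Sum>i<n. i) \<longleftrightarrow> n mod 4 = 0 \<or> n mod 4 = 1" for n :: nat
proof (induction n)
  case (Suc n)
  have "(\<Sum>i<Suc n. i) = (\<Sum>i<n. i) + n" by simp
  with Suc.IH show ?case by presburger
qed simp

lemma minus_one_power_prime_sign:
  assumes "prime p"
  shows "(-1 :: 'a::comm_ring_1) ^ (p - 1) * (-1) ^ (\<Sum>i<p. i) = (if p mod 4 = 3 then -1 else 1)"
proof (cases "p = 2")
  case False
  then have "odd p"
    using prime_odd_nat[OF assms] prime_ge_2_nat[OF assms] by simp
  then have "even (p - 1)" and "p mod 4 = 1 \<or> p mod 4 = 3"
    by presburger+
  then show ?thesis
    using even_sum_lessThan_iff[of p] by (auto simp: minus_one_power_iff)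
qed (simp add: numeral_2_eq_2)

theorem det_Md_power_prod_linear:
  fixes x :: "nat \<Rightarrow> 'a::idom"
  assumes "CHAR('a) > 0" and "inj_on x {..<CHAR('a)}"
  defines "p \<equiv> CHAR('a)"
  shows "det (Md p (p - 1) ((\<Prod>m<p. [:- x m, 1:]) ^ (p - 1)))
       = (if p mod 4 = 3 then -1 else 1) * (\<Prod>i<p. \<Prod>m\<in>{i<..<p}. (x i - x m)) ^ (p - 1)"
proof -
  define g where "g = (\<Prod>m<p. [:- x m, 1:]) ^ (p - 1)"
  define D where "D = (\<Prod>i<p. \<Prod>m\<in>{i<..<p}. (x i - x m))"
  define \<epsilon> where "\<epsilon> = (if p mod 4 = 3 then -1 else 1 :: 'a)"
  have prime: "prime p"
    using assms(1) unfolding p_def by (rule prime_CHAR_semidom)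
  have A_Md: "det (coeff_block_mat p g) = (-1) ^ (p - 1) * det (Md p (p - 1) g)"
  proof (rule det_coeff_block_mat)
    show "degree g = (p - 1) * p"
      by (simp add: g_def degree_power_eq degree_prod_linear)
    show "lead_coeff g = 1"
      unfolding g_def lead_coeff_power lead_coeff_prod_linear by simp
  qed (rule prime_gt_0_nat[OF prime])
  have sign: "(-1) ^ (p - 1) * (-1) ^ (\<Sum>i<p. i) = \<epsilon>" and "\<epsilon> * \<epsilon> = 1"
    using minus_one_power_prime_sign[OF prime] by (simp_all add: \<epsilon>_def)
  have "D ^ (p - 1) = det (coeff_block_mat p g) * (-1) ^ (\<Sum>i<p. i)"
    using det_coeff_block_mat_power_prod_linear[OF prime[unfolded p_def] assms(2)]
    unfolding g_def D_def p_def by (rule sym)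
  also have "\<dots> = det (Md p (p - 1) g) * ((-1) ^ (p - 1) * (-1) ^ (\<Sum>i<p. i))"
    unfolding A_Md by (simp only: mult_ac)
  finally have "\<epsilon> * D ^ (p - 1) = det (Md p (p - 1) g) * (\<epsilon> * \<epsilon>)"
    unfolding sign by (simp only: mult_ac)
  then show ?thesis
    unfolding \<open>\<epsilon> * \<epsilon> = 1\<close> g_def[symmetric] D_def[symmetric] \<epsilon>_def[symmetric] by simp
qed

section \<open>Specialization to F_p[x_1, x_2, ...]\<close>

lemma CHAR_poly_mapping: "CHAR('a::comm_monoid_add \<Rightarrow>\<^sub>0 'b::comm_semiring_1) = CHAR('b)"
proof -
  have "(of_nat n :: 'a \<Rightarrow>\<^sub>0 'b) = 0 \<longleftrightarrow> (of_nat n :: 'b) = 0" for n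
  proof
    assume "(of_nat n :: 'a \<Rightarrow>\<^sub>0 'b) = 0"
    have "(of_nat n :: 'b) = Poly_Mapping.lookup (of_nat n :: 'a \<Rightarrow>\<^sub>0 'b) 0"
      by (simp add: lookup_of_nat)
    also have "\<dots> = 0"
      by (simp only: \<open>of_nat n = 0\<close> lookup_zero)
    finally show "(of_nat n :: 'b) = 0" .
  qed (metis single_of_nat single_zero)
  then show ?thesis
    by (intro CHAR_eqI) (simp_all add: of_nat_eq_0_iff_char_dvd)
qed

lemma inj_Xv: "inj (Xv :: nat \<Rightarrow> 'p::prime_card mpoly)"
  unfolding inj_def Xv_def by (metis lookup_single_eq lookup_single_not_eq zero_neq_one)

lemma fpoly_eq_prod_lessThan: "fpoly r = (\<Prod>m<r. [:- Xv (Suc m), 1:])"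
  by (simp add: fpoly_def prod.atLeast1_atMost_eq)

lemma delta_eq_prod_lessThan: "delta r = (\<Prod>i<r. \<Prod>m\<in>{i<..<r}. (Xv (Suc i) - Xv (Suc m)))"
proof -
  have "(\<Prod>j\<in>{Suc i<..r}. (Xv (Suc i) - Xv j :: 'a mpoly)) = (\<Prod>m\<in>{i<..<r}. (Xv (Suc i) - Xv (Suc m)))"
    for i by (rule prod.reindex_bij_witness[of _ Suc "\<lambda>j. j - 1"]) auto
  then show ?thesis
    by (simp add: delta_def prod.atLeast1_atMost_eq)
qed

lemma B0_dvdD:
  assumes "prime p" and "(r, e, d) \<in> B0 p" and "p dvd r"
  shows "r = p \<and> e = p - 1 \<and> d = p - 1"
proof -
  have p: "p \<ge> 2" using assms(1) by (rule prime_ge_2_nat)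
  from assms(2) have r: "2 \<le> r" "r \<le> p + 1" and e: "e \<le> p - 1" "r * (p - 1 - e) \<le> p - 1"
    and d: "d = r - 1"
    by (auto simp: B0_def)
  from assms(3) obtain k where k: "r = p * k" by blast
  have "k \<noteq> 0" using k r(1) by (intro notI) simp
  moreover have "\<not> k \<ge> 2"
  proof
    assume "k \<ge> 2"
    then have "p * 2 \<le> r" using k by simp
    with r p show False by linarith
  qed
  ultimately have "r = p" using k by simp
  moreover have "p - 1 - e = 0"
  proof (rule ccontr)
    assume "p - 1 - e \<noteq> 0"
    then have "p \<le> r * (p - 1 - e)" using \<open>r = p\<close> by simp
    with e p show False by linarith
  qed
  ultimately show ?thesis using e d by simp
qed

theorem proposition5:
  fixes r e d :: nat
  assumes "(r, e, d) \<in> B0 CARD('p::prime_card)"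
    and "CARD('p) dvd r"
  shows "r = CARD('p) \<and> e = CARD('p) - 1 \<and> d = CARD('p) - 1 \<and>
    det (Md CARD('p) d ((fpoly r :: 'p mpoly poly) ^ e))
      = (if CARD('p) mod 4 = 3 then - 1 else 1) * delta r ^ (2 * e - (CARD('p) - 1))"
proof -
  have params: "r = CARD('p) \<and> e = CARD('p) - 1 \<and> d = CARD('p) - 1"
    using prime_card assms by (rule B0_dvdD)
  have char: "CHAR('p mpoly) = CARD('p)"
    by (simp add: CHAR_poly_mapping)
  have inj: "inj_on (\<lambda>m. Xv (Suc m) :: 'p mpoly) {..<CHAR('p mpoly)}"
    using inj_Xv by (auto simp: inj_def inj_on_def)
  have "det (Md CARD('p) (CARD('p) - 1) ((fpoly CARD('p) :: 'p mpoly poly) ^ (CARD('p) - 1)))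
      = (if CARD('p) mod 4 = 3 then - 1 else 1) * delta CARD('p) ^ (CARD('p) - 1)"
    using det_Md_power_prod_linear[where 'a = "'p mpoly", OF _ inj] char
    by (simp add: fpoly_eq_prod_lessThan delta_eq_prod_lessThan)
  moreover have "2 * e - (CARD('p) - 1) = CARD('p) - 1"
    using params by linarith
  ultimately show ?thesis
    using params by simp
qed

end
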